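(* Let $(H,\cdot,1,\Delta,\epsilon,S,\rightharpoonup)$ be a Yetter--Drinfeld post-Hopf algebra, and define $x\bullet_\rightharpoonup y:=x_1\cdot(x_2\rightharpoonup y)$ and $S_\rightharpoonup(x):=\beta_\rightharpoonup(x_1)(S(x_2))$ for $x,y\in H$. Then $H_\rightharpoonup:=(H,\bullet_\rightharpoonup,1,\Delta,\epsilon,S_\rightharpoonup)$ is a Hopf algebra (in particular $\bullet_\rightharpoonup$ is associative with unit $1$, $\Delta$ and $\epsilon$ are multiplicative for $\bullet_\rightharpoonup$, and $S_\rightharpoonup$ is an antipode).
   Context: Conventions: $\Bbbk$ is a field; algebras are associative unital, coalgebras coassociative counital; Sweedler notation $\Delta(c)=c_1\otimes c_2$ (summation omitted), iterated as $c_1\otimes c_2\otimes c_3$ etc.; $H\otimes H$ carries the tensor product coalgebra structure. Definition (Yetter--Drinfeld post-Hopf algebra). A tuple $(H,\cdot,1,\Delta,\epsilon,S,\rightharpoonup)$ where $(H,\cdot,1)$ is an algebra, $(H,\Delta,\epsilon)$ is a coalgebra on the same vector space, $S:H\to H$ is linear with $x_1\cdot S(x_2)=S(x_1)\cdot x_2=\epsilon(x)1$ for all $x$, and $\rightharpoonup:H\otimes H\to H$ is a coalgebra morphism, such that for all $x,y,z\in H$: (P1) $x\rightharpoonup(y\cdot z)=(x_1\rightharpoonup y)\cdot(x_2\rightharpoonup z)$; (P2) $x\rightharpoonup(y\rightharpoonup z)=\big(x_1\cdot(x_2\rightharpoonup y)\big)\rightharpoonup z$; (P3) the map $\alpha_\rightharpoonup:H\to\mathrm{End}(H)$,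 $\alpha_\rightharpoonup(x)(y)=x\rightharpoonup y$, is convolution invertible, i.e. there is $\beta_\rightharpoonup:H\to\mathrm{End}(H)$ with $\alpha_\rightharpoonup(x_1)\circ\beta_\rightharpoonup(x_2)=\beta_\rightharpoonup(x_1)\circ\alpha_\rightharpoonup(x_2)=\epsilon(x)\mathrm{Id}_H$; (P4) $\epsilon(a\cdot b)=\epsilon(a)\epsilon(b)$, $\epsilon(1)=1_\Bbbk$, $\Delta(1)=1\otimes 1$; (P5) $\Delta(x\cdot y)=\Big(x_1\cdot\alpha_\rightharpoonup(x_2)\big(\beta_\rightharpoonup(x_4)(y_1)\big)\Big)\otimes(x_3\cdot y_2)$; (P6) setting $x\bullet_\rightharpoonup y:=x_1\cdot(x_2\rightharpoonup y)$, $S_\rightharpoonup(x):=\beta_\rightharpoonup(x_1)(S(x_2))$ and $x\leftharpoonup y:=\big(S_\rightharpoonup(x_1\rightharpoonup y_1)\bullet_\rightharpoonup x_2\big)\bullet_\rightharpoonup y_2$, one has $\Delta(S_\rightharpoonup(x))=S_\rightharpoonup(x_2)\otimes S_\rightharpoonup(x_1)$ and $(x_1\rightharpoonup y_1)\otimes(x_2\leftharpoonup y_2)=(x_2\rightharpoonup y_2)\otimes(x_1\leftharpoonup y_1)$. *)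

theory Defs
  imports Main HOL.Vector_Spaces
begin

text \<open>
Tensor products are not available in the library.  We therefore represent the
comultiplication by a function  comul :: 'h => ('h * 'h) list  giving, for each x,
some representation  Delta(x) = sum of a (x) b  over the pairs (a,b) in the list.
Sweedler sums  f(x_1,x_2)  are written  sw comul x f.  Equalities in H (x) H
(resp. H (x) H (x) H) are stated by testing against all bilinear
(resp. trilinear) forms with values in 'k; over a field two tensors coincide
iff all such forms agree on them, so this is exactly equality of tensors.
\<close>

definition sw :: "('h \<Rightarrow> ('h \<times> 'h) list) \<Rightarrow> 'h \<Rightarrow> ('h \<Rightarrow> 'h \<Rightarrow> 'v::comm_monoid_add) \<Rightarrow> 'v" where
  "sw comul x f = sum_list (map (\<lambda>(a, b). f a b) (comul x))"

text \<open>x_1 (x) x_2 (x) x_3 := (Delta (x) id) Delta x  (well defined by coassociativity)\<close>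
definition sw3 :: "('h \<Rightarrow> ('h \<times> 'h) list) \<Rightarrow> 'h \<Rightarrow> ('h \<Rightarrow> 'h \<Rightarrow> 'h \<Rightarrow> 'v::comm_monoid_add) \<Rightarrow> 'v" where
  "sw3 comul x f = sw comul x (\<lambda>a b. sw comul a (\<lambda>c d. f c d b))"

definition sw4 :: "('h \<Rightarrow> ('h \<times> 'h) list) \<Rightarrow> 'h \<Rightarrow> ('h \<Rightarrow> 'h \<Rightarrow> 'h \<Rightarrow> 'h \<Rightarrow> 'v::comm_monoid_add) \<Rightarrow> 'v" where
  "sw4 comul x f = sw comul x (\<lambda>a b. sw3 comul a (\<lambda>c d e. f c d e b))"

definition bilinear_form :: "('k::field \<Rightarrow> 'h::ab_group_add \<Rightarrow> 'h) \<Rightarrow> ('h \<Rightarrow> 'h \<Rightarrow> 'k) \<Rightarrow> bool" where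
  "bilinear_form sc B \<longleftrightarrow>
     (\<forall>x. Vector_Spaces.linear sc (*) (B x)) \<and> (\<forall>y. Vector_Spaces.linear sc (*) (\<lambda>x. B x y))"

definition trilinear_form :: "('k::field \<Rightarrow> 'h::ab_group_add \<Rightarrow> 'h) \<Rightarrow> ('h \<Rightarrow> 'h \<Rightarrow> 'h \<Rightarrow> 'k) \<Rightarrow> bool" where
  "trilinear_form sc T \<longleftrightarrow>
     (\<forall>y z. Vector_Spaces.linear sc (*) (\<lambda>x. T x y z)) \<and>
     (\<forall>x z. Vector_Spaces.linear sc (*) (\<lambda>y. T x y z)) \<and>
     (\<forall>x y. Vector_Spaces.linear sc (*) (\<lambda>z. T x y z))"

definition bilinear_map :: "('k::field \<Rightarrow> 'h::ab_group_add \<Rightarrow> 'h) \<Rightarrow> ('h \<Rightarrow> 'h \<Rightarrow> 'h) \<Rightarrow> bool" where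
  "bilinear_map sc m \<longleftrightarrow>
     (\<forall>x. Vector_Spaces.linear sc sc (m x)) \<and> (\<forall>y. Vector_Spaces.linear sc sc (\<lambda>x. m x y))"

definition is_algebra :: "('k::field \<Rightarrow> 'h::ab_group_add \<Rightarrow> 'h) \<Rightarrow> ('h \<Rightarrow> 'h \<Rightarrow> 'h) \<Rightarrow> 'h \<Rightarrow> bool" where
  "is_algebra sc mult one \<longleftrightarrow>
     Vector_Spaces.vector_space sc \<and> bilinear_map sc mult \<and>
     (\<forall>x y z. mult (mult x y) z = mult x (mult y z)) \<and>
     (\<forall>x. mult one x = x \<and> mult x one = x)"

definition is_coalgebra :: "('k::field \<Rightarrow> 'h::ab_group_add \<Rightarrow> 'h) \<Rightarrow> ('h \<Rightarrow> ('h \<times> 'h) list) \<Rightarrow> ('h \<Rightarrow> 'k) \<Rightarrow> bool" where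
  "is_coalgebra sc comul counit \<longleftrightarrow>
     Vector_Spaces.vector_space sc \<and>
     (\<forall>B. bilinear_form sc B \<longrightarrow> Vector_Spaces.linear sc (*) (\<lambda>x. sw comul x B)) \<and>
     Vector_Spaces.linear sc (*) counit \<and>
     (\<forall>T x. trilinear_form sc T \<longrightarrow>
        sw comul x (\<lambda>a b. sw comul a (\<lambda>c d. T c d b)) =
        sw comul x (\<lambda>a b. sw comul b (\<lambda>c d. T a c d))) \<and>
     (\<forall>x. sw comul x (\<lambda>a b. sc (counit a) b) = x \<and> sw comul x (\<lambda>a b. sc (counit b) a) = x)"

definition is_hopf_algebra ::
  "('k::field \<Rightarrow> 'h::ab_group_add \<Rightarrow> 'h) \<Rightarrow> ('h \<Rightarrow> 'h \<Rightarrow> 'h) \<Rightarrow> 'h \<Rightarrow>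
   ('h \<Rightarrow> ('h \<times> 'h) list) \<Rightarrow> ('h \<Rightarrow> 'k) \<Rightarrow> ('h \<Rightarrow> 'h) \<Rightarrow> bool" where
  "is_hopf_algebra sc mult one comul counit anti \<longleftrightarrow>
     is_algebra sc mult one \<and> is_coalgebra sc comul counit \<and>
     (\<forall>B x y. bilinear_form sc B \<longrightarrow>
        sw comul (mult x y) B = sw comul x (\<lambda>x1 x2. sw comul y (\<lambda>y1 y2. B (mult x1 y1) (mult x2 y2)))) \<and>
     (\<forall>B. bilinear_form sc B \<longrightarrow> sw comul one B = B one one) \<and>
     (\<forall>x y. counit (mult x y) = counit x * counit y) \<and> counit one = 1 \<and>
     Vector_Spaces.linear sc sc anti \<and>
     (\<forall>x. sw comul x (\<lambda>a b. mult a (anti b)) = sc (counit x) one \<and>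
          sw comul x (\<lambda>a b. mult (anti a) b) = sc (counit x) one)"

definition bullet :: "('h \<Rightarrow> ('h \<times> 'h) list) \<Rightarrow> ('h \<Rightarrow> 'h \<Rightarrow> 'h) \<Rightarrow> ('h \<Rightarrow> 'h \<Rightarrow> 'h) \<Rightarrow> 'h \<Rightarrow> 'h \<Rightarrow> 'h::ab_group_add" where
  "bullet comul mult act x y = sw comul x (\<lambda>a b. mult a (act b y))"

definition S_act :: "('h \<Rightarrow> ('h \<times> 'h) list) \<Rightarrow> ('h \<Rightarrow> 'h \<Rightarrow> 'h) \<Rightarrow> ('h \<Rightarrow> 'h) \<Rightarrow> 'h \<Rightarrow> 'h::ab_group_add" where
  "S_act comul beta anti x = sw comul x (\<lambda>a b. beta a (anti b))"

definition left_act ::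
  "('h \<Rightarrow> ('h \<times> 'h) list) \<Rightarrow> ('h \<Rightarrow> 'h \<Rightarrow> 'h) \<Rightarrow> ('h \<Rightarrow> 'h \<Rightarrow> 'h) \<Rightarrow> ('h \<Rightarrow> 'h \<Rightarrow> 'h) \<Rightarrow> ('h \<Rightarrow> 'h) \<Rightarrow>
   'h \<Rightarrow> 'h \<Rightarrow> 'h::ab_group_add" where
  "left_act comul mult act beta anti x y =
     sw comul x (\<lambda>x1 x2. sw comul y (\<lambda>y1 y2.
        bullet comul mult act (bullet comul mult act (S_act comul beta anti (act x1 y1)) x2) y2))"

text \<open>
The convolution inverse beta of alpha
(beta : H -> End(H), linear, with values linear endomorphisms) is passed as an
explicit parameter; since convolution inverses are unique this is equivalent to
requiring its existence and then using it in (P5) and (P6).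
\<close>
definition yd_post_hopf ::
  "('k::field \<Rightarrow> 'h::ab_group_add \<Rightarrow> 'h) \<Rightarrow> ('h \<Rightarrow> 'h \<Rightarrow> 'h) \<Rightarrow> 'h \<Rightarrow>
   ('h \<Rightarrow> ('h \<times> 'h) list) \<Rightarrow> ('h \<Rightarrow> 'k) \<Rightarrow> ('h \<Rightarrow> 'h) \<Rightarrow> ('h \<Rightarrow> 'h \<Rightarrow> 'h) \<Rightarrow> ('h \<Rightarrow> 'h \<Rightarrow> 'h) \<Rightarrow> bool" where
  "yd_post_hopf sc mult one comul counit anti act beta \<longleftrightarrow>
     is_algebra sc mult one \<and> is_coalgebra sc comul counit \<and>
     Vector_Spaces.linear sc sc anti \<and>
     (\<forall>x. sw comul x (\<lambda>a b. mult a (anti b)) = sc (counit x) one \<and>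
          sw comul x (\<lambda>a b. mult (anti a) b) = sc (counit x) one) \<and>
     \<comment> \<open>act is a coalgebra morphism H (x) H -> H\<close>
     bilinear_map sc act \<and>
     (\<forall>B x y. bilinear_form sc B \<longrightarrow>
        sw comul (act x y) B = sw comul x (\<lambda>x1 x2. sw comul y (\<lambda>y1 y2. B (act x1 y1) (act x2 y2)))) \<and>
     (\<forall>x y. counit (act x y) = counit x * counit y) \<and>
     \<comment> \<open>(P1)\<close>
     (\<forall>x y z. act x (mult y z) = sw comul x (\<lambda>a b. mult (act a y) (act b z))) \<and>
     \<comment> \<open>(P2)\<close>
     (\<forall>x y z. act x (act y z) = act (sw comul x (\<lambda>a b. mult a (act b y))) z) \<and>
     \<comment> \<open>(P3): beta is the convolution inverse of alpha\<close>
     bilinear_map sc beta \<and>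
     (\<forall>x y. sw comul x (\<lambda>a b. act a (beta b y)) = sc (counit x) y \<and>
            sw comul x (\<lambda>a b. beta a (act b y)) = sc (counit x) y) \<and>
     \<comment> \<open>(P4)\<close>
     (\<forall>x y. counit (mult x y) = counit x * counit y) \<and> counit one = 1 \<and>
     (\<forall>B. bilinear_form sc B \<longrightarrow> sw comul one B = B one one) \<and>
     \<comment> \<open>(P5)\<close>
     (\<forall>B x y. bilinear_form sc B \<longrightarrow>
        sw comul (mult x y) B =
        sw4 comul x (\<lambda>x1 x2 x3 x4. sw comul y (\<lambda>y1 y2.
           B (mult x1 (act x2 (beta x4 y1))) (mult x3 y2)))) \<and>
     \<comment> \<open>(P6)\<close>
     (\<forall>B x. bilinear_form sc B \<longrightarrow>
        sw comul (S_act comul beta anti x) B =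
        sw comul x (\<lambda>x1 x2. B (S_act comul beta anti x2) (S_act comul beta anti x1))) \<and>
     (\<forall>B x y. bilinear_form sc B \<longrightarrow>
        sw comul x (\<lambda>x1 x2. sw comul y (\<lambda>y1 y2. B (act x1 y1) (left_act comul mult act beta anti x2 y2))) =
        sw comul x (\<lambda>x1 x2. sw comul y (\<lambda>y1 y2. B (act x2 y2) (left_act comul mult act beta anti x1 y1))))"

end

theory Submission
  imports Defs
begin

text \<open>
By (P2) the action \<open>\<rightharpoonup>\<close> is a left action of \<open>(H, \<bullet>)\<close> on \<open>H\<close>, and by (P1) it acts by
algebra maps; with \<open>x \<rightharpoonup> 1 = \<epsilon>(x) 1\<close> and \<open>1 \<rightharpoonup> z = z\<close> this gives that \<open>\<bullet>\<close> is unital.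
Expanding \<open>\<Delta>(x\<^sub>1 \<cdot> (x\<^sub>2 \<rightharpoonup> y))\<close> by (P5) and passing \<open>\<rightharpoonup>\<close> through \<open>\<Delta>\<close> produces
\<open>\<beta>(x\<^sub>4) \<circ> \<alpha>(x\<^sub>5)\<close>, which cancels to \<open>\<epsilon>(x\<^sub>4)\<close>: so \<open>\<Delta>\<close> is multiplicative for \<open>\<bullet>\<close>, and
associativity of \<open>\<bullet>\<close> follows from (P1), (P2) and coassociativity.  Since \<open>S\<^sub>\<rightharpoonup>\<close> is a
right \<open>\<bullet>\<close>-convolution inverse of the identity, \<open>\<alpha> \<circ> S\<^sub>\<rightharpoonup>\<close> is a right convolution inverse
of \<open>\<alpha>\<close>, hence equals \<open>\<beta>\<close>.  Together with (P6) and the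
anti-multiplicativity of \<open>\<beta>\<close> this makes \<open>S\<^sub>\<rightharpoonup>\<close> a left antipode as well.
\<close>

named_theorems linearity_intros

lemma sw_additive:
  assumes "\<And>u v. g (u + v) = g u + g v" "g 0 = 0"
  shows "g (sw comul x F) = sw comul x (\<lambda>a b. g (F a b))"
proof -
  have "g (sum_list (map (\<lambda>(a, b). F a b) xs)) = sum_list (map (\<lambda>(a, b). g (F a b)) xs)" for xs
    by (induction xs) (auto simp: assms)
  then show ?thesis unfolding sw_def .
qed

lemma sw_add: "sw comul x (\<lambda>a b. F a b + G a b) = sw comul x F + sw comul x G"
proof -
  have "sum_list (map (\<lambda>(a, b). F a b + G a b) xs)
      = sum_list (map (\<lambda>(a, b). F a b) xs) + sum_list (map (\<lambda>(a, b). G a b) xs)" for xs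
    by (induction xs) (auto simp: algebra_simps)
  then show ?thesis unfolding sw_def .
qed

lemma sw_zero: "sw comul x (\<lambda>a b. 0) = 0"
proof -
  have "sum_list (map (\<lambda>(a, b). 0) xs) = (0::'a::comm_monoid_add)" for xs :: "('b \<times> 'b) list"
    by (induction xs) auto
  then show ?thesis unfolding sw_def .
qed

lemma sw_commute:
  "sw comul x (\<lambda>a b. sw comul y (\<lambda>c d. F a b c d)) = sw comul y (\<lambda>c d. sw comul x (\<lambda>a b. F a b c d))"
proof -
  have "sum_list (map (\<lambda>(a, b). sw comul y (\<lambda>c d. F a b c d)) xs)
      = sw comul y (\<lambda>c d. sum_list (map (\<lambda>(a, b). F a b c d) xs))" for xs
    by (induction xs) (auto simp: sw_add sw_zero)
  then show ?thesis unfolding sw_def[of comul x] by simp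
qed

lemma sw_cong: "(\<And>a b. F a b = G a b) \<Longrightarrow> sw comul x F = sw comul x G"
  by (simp add: sw_def)

lemma linear_map_add: "Vector_Spaces.linear s1 s2 f \<Longrightarrow> f (x + y) = f x + f y"
  by (simp add: linear_iff)

lemma linear_map_scale: "Vector_Spaces.linear s1 s2 f \<Longrightarrow> f (s1 c x) = s2 c (f x)"
  by (simp add: linear_iff)

lemma linear_map_zero: "Vector_Spaces.linear s1 s2 f \<Longrightarrow> f 0 = 0"
  using linear_map_add[of s1 s2 f 0 0] by simp

lemma linear_map_diff: "Vector_Spaces.linear s1 s2 f \<Longrightarrow> f (x - y) = f x - f y"
  using linear_map_add[of s1 s2 f "x - y" y] by (simp add: algebra_simps)

lemma linear_map_sw:
  "Vector_Spaces.linear s1 s2 f \<Longrightarrow> f (sw comul x F) = sw comul x (\<lambda>a b. f (F a b))"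
  by (rule sw_additive) (auto simp: linear_map_add linear_map_zero)

lemma vector_space_field: "Vector_Spaces.vector_space ((*) :: 'k::field \<Rightarrow> 'k \<Rightarrow> 'k)"
  unfolding vector_space_def by (simp add: algebra_simps)

text \<open>
The axioms state identities in \<open>H \<otimes> H\<close> only after pairing with scalar-valued forms; separating
points by linear forms transfers them to \<open>H\<close>-valued bilinear expressions.
\<close>

lemma vector_space_eq_by_linear_forms:
  fixes sc :: "'k::field \<Rightarrow> 'h::ab_group_add \<Rightarrow> 'h"
  assumes vs: "Vector_Spaces.vector_space sc"
    and eq: "\<And>\<phi>. Vector_Spaces.linear sc (*) \<phi> \<Longrightarrow> \<phi> u = \<phi> v"
  shows "u = v"
proof (rule ccontr)
  assume "u \<noteq> v"
  interpret V: vector_space sc by (rule vs)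
  interpret P: vector_space_pair sc "(*) :: 'k \<Rightarrow> 'k \<Rightarrow> 'k"
    unfolding vector_space_pair_def using vs vector_space_field by blast
  have ind: "V.independent {u - v}" using \<open>u \<noteq> v\<close> by simp
  define \<phi> where "\<phi> = P.construct {u - v} (\<lambda>_. 1)"
  have lin: "Vector_Spaces.linear sc (*) \<phi>" unfolding \<phi>_def by (rule P.linear_construct[OF ind])
  have "\<phi> (u - v) = 1" unfolding \<phi>_def using P.construct_basis[OF ind] by blast
  moreover have "\<phi> (u - v) = 0" using eq[OF lin] linear_map_diff[OF lin, of u v] by simp
  ultimately show False by simp
qed

context vector_space
begin

abbreviation lin :: "('b \<Rightarrow> 'b) \<Rightarrow> bool" where "lin f \<equiv> Vector_Spaces.linear scale scale f"
abbreviation linform :: "('b \<Rightarrow> 'a) \<Rightarrow> bool" where "linform f \<equiv> Vector_Spaces.linear scale (*) f"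

lemma linI: "(\<And>x y. f (x + y) = f x + f y) \<Longrightarrow> (\<And>c x. f (scale c x) = scale c (f x)) \<Longrightarrow> lin f"
  by (simp add: linear_iff vector_space_axioms)

lemma linformI: "(\<And>x y. f (x + y) = f x + f y) \<Longrightarrow> (\<And>c x. f (scale c x) = c * f x) \<Longrightarrow> linform f"
  by (simp add: linear_iff vector_space_axioms vector_space_field)

lemma eq_by_linear_forms: "(\<And>\<phi>. linform \<phi> \<Longrightarrow> \<phi> u = \<phi> v) \<Longrightarrow> u = v"
  by (rule vector_space_eq_by_linear_forms[OF vector_space_axioms])

lemma lin_comp: "lin g \<Longrightarrow> lin f \<Longrightarrow> lin (\<lambda>x. g (f x))"
  by (rule linI) (simp_all add: linear_map_add linear_map_scale)

lemma linform_comp: "linform g \<Longrightarrow> lin f \<Longrightarrow> linform (\<lambda>x. g (f x))"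
  by (rule linformI) (simp_all add: linear_map_add linear_map_scale)

lemma lin_id [linearity_intros]: "lin (\<lambda>x. x)"
  by (rule linI) auto

lemma lin_scale: "lin (scale c)"
  by (rule linI) (simp_all add: scale_right_distrib mult.commute)

lemma lin_scale_by_linform [linearity_intros]: "linform g \<Longrightarrow> lin (\<lambda>x. scale (g x) c)"
  by (rule linI) (simp_all add: linear_map_add linear_map_scale scale_left_distrib)

lemma bilinear_formI:
  "(\<And>q. linform (\<lambda>p. G p q)) \<Longrightarrow> (\<And>p. linform (\<lambda>q. G p q)) \<Longrightarrow> bilinear_form scale G"
  unfolding bilinear_form_def by auto

lemma trilinear_formI:
  "(\<And>b c. linform (\<lambda>a. T a b c)) \<Longrightarrow> (\<And>a c. linform (\<lambda>b. T a b c)) \<Longrightarrow>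
   (\<And>a b. linform (\<lambda>c. T a b c)) \<Longrightarrow> trilinear_form scale T"
  unfolding trilinear_form_def by auto

lemma bilinear_form_comp_left:
  "bilinear_form scale B \<Longrightarrow> lin f \<Longrightarrow> linform (\<lambda>x. B (f x) c)"
  unfolding bilinear_form_def by (rule linform_comp) auto

lemma bilinear_form_comp_right:
  "bilinear_form scale B \<Longrightarrow> lin f \<Longrightarrow> linform (\<lambda>x. B c (f x))"
  unfolding bilinear_form_def by (rule linform_comp) auto

lemma bilinear_form_scale_left: "bilinear_form scale B \<Longrightarrow> B (scale c u) v = c * B u v"
  unfolding bilinear_form_def using linear_map_scale[of scale "(*)" "\<lambda>u. B u v"] by auto

lemma bilinear_form_sw_left:
  "bilinear_form scale B \<Longrightarrow> B (sw comul x F) c = sw comul x (\<lambda>a b. B (F a b) c)"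
  unfolding bilinear_form_def using linear_map_sw[of scale "(*)" "\<lambda>u. B u c"] by auto

lemma bilinear_form_sw_right:
  "bilinear_form scale B \<Longrightarrow> B c (sw comul x F) = sw comul x (\<lambda>a b. B c (F a b))"
  unfolding bilinear_form_def using linear_map_sw[of scale "(*)" "B c"] by auto

lemma const_times_sw: "(c::'a) * sw comul x G = sw comul x (\<lambda>a b. c * G a b)"
  by (rule sw_additive[where g="\<lambda>u. c * u"]) (auto simp: algebra_simps)

lemma sw_times_const: "sw comul x G * (c::'a) = sw comul x (\<lambda>a b. G a b * c)"
  by (rule sw_additive[where g="\<lambda>u. u * c"]) (auto simp: algebra_simps)

lemma lin_sw_inner [linearity_intros]:
  assumes "\<And>p q. lin (\<lambda>x. F x p q)"
  shows "lin (\<lambda>x. sw comul a (\<lambda>p q. F x p q))"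
proof (rule linI)
  show "sw comul a (\<lambda>p q. F (x + y) p q) = sw comul a (\<lambda>p q. F x p q) + sw comul a (\<lambda>p q. F y p q)"
    for x y using linear_map_add[OF assms] by (simp add: sw_add)
  show "sw comul a (\<lambda>p q. F (scale c x) p q) = scale c (sw comul a (\<lambda>p q. F x p q))"
    for c x using linear_map_scale[OF assms] by (simp add: linear_map_sw[OF lin_scale])
qed

lemma linform_sw_inner [linearity_intros]:
  assumes "\<And>p q. linform (\<lambda>x. F x p q)"
  shows "linform (\<lambda>x. sw comul a (\<lambda>p q. F x p q))"
proof (rule linformI)
  show "sw comul a (\<lambda>p q. F (x + y) p q) = sw comul a (\<lambda>p q. F x p q) + sw comul a (\<lambda>p q. F y p q)"
    for x y using linear_map_add[OF assms] by (simp add: sw_add)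
  show "sw comul a (\<lambda>p q. F (scale c x) p q) = c * sw comul a (\<lambda>p q. F x p q)"
    for c x using linear_map_scale[OF assms] by (simp add: const_times_sw)
qed

end

locale coalgebra_space = vector_space sc
  for sc :: "'k::field \<Rightarrow> 'h::ab_group_add \<Rightarrow> 'h" +
  fixes comul :: "'h \<Rightarrow> ('h \<times> 'h) list"
    and counit :: "'h \<Rightarrow> 'k"
  assumes coalgebra: "is_coalgebra sc comul counit"
begin

lemma linform_sw: "bilinear_form sc B \<Longrightarrow> linform (\<lambda>x. sw comul x B)"
  using coalgebra unfolding is_coalgebra_def by blast

lemma linform_counit: "linform counit"
  using coalgebra unfolding is_coalgebra_def by blast

lemma counit_left: "sw comul x (\<lambda>a b. sc (counit a) b) = x"
  using coalgebra unfolding is_coalgebra_def by blast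

lemma counit_right: "sw comul x (\<lambda>a b. sc (counit b) a) = x"
  using coalgebra unfolding is_coalgebra_def by blast

lemma linform_counit_comp [linearity_intros]: "lin f \<Longrightarrow> linform (\<lambda>x. counit (f x))"
  by (rule linform_comp[OF linform_counit])

lemma linform_sw_comp [linearity_intros]:
  "lin f \<Longrightarrow> (\<And>q. linform (\<lambda>p. G p q)) \<Longrightarrow> (\<And>p. linform (\<lambda>q. G p q)) \<Longrightarrow>
   linform (\<lambda>x. sw comul (f x) G)"
  by (rule linform_comp[OF linform_sw[OF bilinear_formI]])

lemma linform_sw_values:
  assumes "linform \<phi>" "\<And>q. lin (\<lambda>p. G p q)" "\<And>p. lin (\<lambda>q. G p q)"
  shows "linform (\<lambda>x. sw comul x (\<lambda>a b. \<phi> (G a b)))"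
  by (rule linform_sw, rule bilinear_formI; rule linform_comp[OF assms(1)]) (use assms in auto)

lemma lin_sw:
  assumes "\<And>q. lin (\<lambda>p. G p q)" "\<And>p. lin (\<lambda>q. G p q)"
  shows "lin (\<lambda>x. sw comul x G)"
proof (rule linI)
  fix x y c
  show "sw comul (x + y) G = sw comul x G + sw comul y G"
  proof (rule eq_by_linear_forms)
    fix \<phi> assume \<phi>: "linform \<phi>"
    show "\<phi> (sw comul (x + y) G) = \<phi> (sw comul x G + sw comul y G)"
      by (simp add: linear_map_add[OF \<phi>] linear_map_sw[OF \<phi>]
          linear_map_add[OF linform_sw_values[OF \<phi> assms]])
  qed
  show "sw comul (sc c x) G = sc c (sw comul x G)"
  proof (rule eq_by_linear_forms)
    fix \<phi> assume \<phi>: "linform \<phi>"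
    show "\<phi> (sw comul (sc c x) G) = \<phi> (sc c (sw comul x G))"
      by (simp add: linear_map_scale[OF \<phi>] linear_map_sw[OF \<phi>]
          linear_map_scale[OF linform_sw_values[OF \<phi> assms]])
  qed
qed

lemma lin_sw_comp [linearity_intros]:
  "lin f \<Longrightarrow> (\<And>q. lin (\<lambda>p. G p q)) \<Longrightarrow> (\<And>p. lin (\<lambda>q. G p q)) \<Longrightarrow> lin (\<lambda>x. sw comul (f x) G)"
  by (rule lin_comp[OF lin_sw])

lemma coassoc_linform:
  assumes "\<And>b c. linform (\<lambda>a. T a b c)" "\<And>a c. linform (\<lambda>b. T a b c)" "\<And>a b. linform (\<lambda>c. T a b c)"
  shows "sw comul x (\<lambda>a b. sw comul a (\<lambda>c d. T c d b)) = sw comul x (\<lambda>a b. sw comul b (\<lambda>c d. T a c d))"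
  using coalgebra trilinear_formI[OF assms] unfolding is_coalgebra_def by blast

lemma coassoc:
  assumes "\<And>b c. lin (\<lambda>a. T a b c)" "\<And>a c. lin (\<lambda>b. T a b c)" "\<And>a b. lin (\<lambda>c. T a b c)"
  shows "sw comul x (\<lambda>a b. sw comul a (\<lambda>c d. T c d b)) = sw comul x (\<lambda>a b. sw comul b (\<lambda>c d. T a c d))"
proof (rule eq_by_linear_forms)
  fix \<phi> assume \<phi>: "linform \<phi>"
  have "sw comul x (\<lambda>a b. sw comul a (\<lambda>c d. \<phi> (T c d b))) = sw comul x (\<lambda>a b. sw comul b (\<lambda>c d. \<phi> (T a c d)))"
    by (rule coassoc_linform; rule linform_comp[OF \<phi>]) (fact assms)+
  then show "\<phi> (sw comul x (\<lambda>a b. sw comul a (\<lambda>c d. T c d b))) = \<phi> (sw comul x (\<lambda>a b. sw comul b (\<lambda>c d. T a c d)))"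
    by (simp add: linear_map_sw[OF \<phi>])
qed

lemma counit_left_lin: "lin f \<Longrightarrow> sw comul x (\<lambda>a b. sc (counit a) (f b)) = f x"
  using linear_map_sw[of sc sc f comul x "\<lambda>a b. sc (counit a) b"] by (simp add: counit_left linear_map_scale)

lemma counit_right_lin: "lin f \<Longrightarrow> sw comul x (\<lambda>a b. sc (counit b) (f a)) = f x"
  using linear_map_sw[of sc sc f comul x "\<lambda>a b. sc (counit b) a"] by (simp add: counit_right linear_map_scale)

lemma counit_left_linform: "linform g \<Longrightarrow> sw comul x (\<lambda>a b. counit a * g b) = g x"
  using linear_map_sw[of sc "(*)" g comul x "\<lambda>a b. sc (counit a) b"] by (simp add: counit_left linear_map_scale)

end

locale yd_post_hopf_algebra = coalgebra_space sc comul counit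
  for sc :: "'k::field \<Rightarrow> 'h::ab_group_add \<Rightarrow> 'h"
    and comul :: "'h \<Rightarrow> ('h \<times> 'h) list"
    and counit :: "'h \<Rightarrow> 'k" +
  fixes mult act beta :: "'h \<Rightarrow> 'h \<Rightarrow> 'h"
    and one :: 'h
    and anti :: "'h \<Rightarrow> 'h"
  assumes yd_post_hopf: "yd_post_hopf sc mult one comul counit anti act beta"
begin

abbreviation bmult :: "'h \<Rightarrow> 'h \<Rightarrow> 'h" where "bmult \<equiv> bullet comul mult act"
abbreviation Sact :: "'h \<Rightarrow> 'h" where "Sact \<equiv> S_act comul beta anti"

lemma algebra: "is_algebra sc mult one"
  using yd_post_hopf unfolding yd_post_hopf_def by (elim conjE) (simp only:)

lemma mult_assoc: "mult (mult x y) z = mult x (mult y z)"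
  using algebra unfolding is_algebra_def by blast

lemma mult_one_left [simp]: "mult one x = x"
  using algebra unfolding is_algebra_def by blast

lemma mult_one_right [simp]: "mult x one = x"
  using algebra unfolding is_algebra_def by blast

lemma lin_mult_left: "lin (\<lambda>x. mult x y)"
  using algebra unfolding is_algebra_def bilinear_map_def by blast

lemma lin_mult_right: "lin (mult x)"
  using algebra unfolding is_algebra_def bilinear_map_def by blast

lemma lin_anti: "lin anti"
  using yd_post_hopf unfolding yd_post_hopf_def by (elim conjE) (simp only:)

lemma antipode_right: "sw comul x (\<lambda>a b. mult a (anti b)) = sc (counit x) one"
  using yd_post_hopf unfolding yd_post_hopf_def by (elim conjE) (simp only:)

lemma antipode_left: "sw comul x (\<lambda>a b. mult (anti a) b) = sc (counit x) one"
  using yd_post_hopf unfolding yd_post_hopf_def by (elim conjE) (simp only:)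

lemma bilinear_map_act: "bilinear_map sc act"
  using yd_post_hopf unfolding yd_post_hopf_def by (elim conjE) (simp only:)

lemma lin_act_left: "lin (\<lambda>x. act x y)"
  using bilinear_map_act unfolding bilinear_map_def by blast

lemma lin_act_right: "lin (act x)"
  using bilinear_map_act unfolding bilinear_map_def by blast

lemma comul_act_linform:
  "bilinear_form sc B \<Longrightarrow>
   sw comul (act x y) B = sw comul x (\<lambda>x1 x2. sw comul y (\<lambda>y1 y2. B (act x1 y1) (act x2 y2)))"
  using yd_post_hopf unfolding yd_post_hopf_def by (elim conjE) (simp only:)

lemma counit_act: "counit (act x y) = counit x * counit y"
  using yd_post_hopf unfolding yd_post_hopf_def by (elim conjE) (simp only:)

lemma act_mult: "act x (mult y z) = sw comul x (\<lambda>a b. mult (act a y) (act b z))"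
  using yd_post_hopf unfolding yd_post_hopf_def by (elim conjE) (simp only:)

lemma act_act: "act x (act y z) = act (sw comul x (\<lambda>a b. mult a (act b y))) z"
  using yd_post_hopf unfolding yd_post_hopf_def by (elim conjE) (simp only:)

lemma bilinear_map_beta: "bilinear_map sc beta"
  using yd_post_hopf unfolding yd_post_hopf_def by (elim conjE) (simp only:)

lemma lin_beta_left: "lin (\<lambda>x. beta x y)"
  using bilinear_map_beta unfolding bilinear_map_def by blast

lemma lin_beta_right: "lin (beta x)"
  using bilinear_map_beta unfolding bilinear_map_def by blast

lemma act_beta: "sw comul x (\<lambda>a b. act a (beta b y)) = sc (counit x) y"
  using yd_post_hopf unfolding yd_post_hopf_def by (elim conjE) (simp only:)

lemma beta_act: "sw comul x (\<lambda>a b. beta a (act b y)) = sc (counit x) y"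
  using yd_post_hopf unfolding yd_post_hopf_def by (elim conjE) (simp only:)

lemma counit_mult: "counit (mult x y) = counit x * counit y"
  using yd_post_hopf unfolding yd_post_hopf_def by (elim conjE) (simp only:)

lemma counit_one: "counit one = 1"
  using yd_post_hopf unfolding yd_post_hopf_def by (elim conjE) (simp only:)

lemma comul_one_linform: "bilinear_form sc B \<Longrightarrow> sw comul one B = B one one"
  using yd_post_hopf unfolding yd_post_hopf_def by (elim conjE) (simp only:)

lemma comul_mult_linform:
  "bilinear_form sc B \<Longrightarrow> sw comul (mult x y) B =
     sw4 comul x (\<lambda>x1 x2 x3 x4. sw comul y (\<lambda>y1 y2. B (mult x1 (act x2 (beta x4 y1))) (mult x3 y2)))"
  using yd_post_hopf unfolding yd_post_hopf_def by (elim conjE) (simp only:)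

lemma comul_S_act_linform:
  "bilinear_form sc B \<Longrightarrow> sw comul (Sact x) B = sw comul x (\<lambda>x1 x2. B (Sact x2) (Sact x1))"
  using yd_post_hopf unfolding yd_post_hopf_def by (elim conjE) (simp only:)

lemma lin_mult_left_comp [linearity_intros]: "lin f \<Longrightarrow> lin (\<lambda>x. mult (f x) c)"
  by (rule lin_comp[OF lin_mult_left])

lemma lin_mult_right_comp [linearity_intros]: "lin f \<Longrightarrow> lin (\<lambda>x. mult c (f x))"
  by (rule lin_comp[OF lin_mult_right])

lemma lin_act_left_comp [linearity_intros]: "lin f \<Longrightarrow> lin (\<lambda>x. act (f x) c)"
  by (rule lin_comp[OF lin_act_left])

lemma lin_act_right_comp [linearity_intros]: "lin f \<Longrightarrow> lin (\<lambda>x. act c (f x))"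
  by (rule lin_comp[OF lin_act_right])

lemma lin_beta_left_comp [linearity_intros]: "lin f \<Longrightarrow> lin (\<lambda>x. beta (f x) c)"
  by (rule lin_comp[OF lin_beta_left])

lemma lin_beta_right_comp [linearity_intros]: "lin f \<Longrightarrow> lin (\<lambda>x. beta c (f x))"
  by (rule lin_comp[OF lin_beta_right])

lemma lin_anti_comp [linearity_intros]: "lin f \<Longrightarrow> lin (\<lambda>x. anti (f x))"
  by (rule lin_comp[OF lin_anti])

lemma lin_S_act_comp [linearity_intros]: "lin f \<Longrightarrow> lin (\<lambda>x. Sact (f x))"
  unfolding S_act_def by (intro linearity_intros)

lemma lin_bullet_left_comp [linearity_intros]: "lin f \<Longrightarrow> lin (\<lambda>x. bmult (f x) c)"
  unfolding bullet_def by (intro linearity_intros)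

lemma lin_bullet_right_comp [linearity_intros]: "lin f \<Longrightarrow> lin (\<lambda>x. bmult c (f x))"
  unfolding bullet_def by (intro linearity_intros)

lemma mult_sw_left: "mult (sw comul x F) c = sw comul x (\<lambda>a b. mult (F a b) c)"
  by (rule linear_map_sw[OF lin_mult_left])

lemma mult_sw_right: "mult c (sw comul x F) = sw comul x (\<lambda>a b. mult c (F a b))"
  by (rule linear_map_sw[OF lin_mult_right])

lemma act_sw_left: "act (sw comul x F) c = sw comul x (\<lambda>a b. act (F a b) c)"
  by (rule linear_map_sw[OF lin_act_left])

lemma act_sw_right: "act c (sw comul x F) = sw comul x (\<lambda>a b. act c (F a b))"
  by (rule linear_map_sw[OF lin_act_right])

lemma beta_sw_right: "beta c (sw comul x F) = sw comul x (\<lambda>a b. beta c (F a b))"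
  by (rule linear_map_sw[OF lin_beta_right])

lemma counit_sw: "counit (sw comul x F) = sw comul x (\<lambda>a b. counit (F a b))"
  by (rule linear_map_sw[OF linform_counit])

lemma comul_one:
  assumes "\<And>q. lin (\<lambda>p. G p q)" "\<And>p. lin (\<lambda>q. G p q)"
  shows "sw comul one G = G one one"
proof (rule eq_by_linear_forms)
  fix \<phi> assume \<phi>: "linform \<phi>"
  have "sw comul one (\<lambda>a b. \<phi> (G a b)) = \<phi> (G one one)"
    by (rule comul_one_linform, rule bilinear_formI; rule linform_comp[OF \<phi>]) (use assms in auto)
  then show "\<phi> (sw comul one G) = \<phi> (G one one)" by (simp add: linear_map_sw[OF \<phi>])
qed

lemma act_one_right: "act x one = sc (counit x) one"
proof -
  have "sc (counit x) w = mult (act x one) w" for w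
  proof -
    have "sc (counit x) w = sw comul x (\<lambda>a b. act a (beta b w))" by (simp add: act_beta)
    also have "\<dots> = sw comul x (\<lambda>a b. sw comul a (\<lambda>p q. mult (act p one) (act q (beta b w))))"
      by (rule sw_cong) (rule act_mult[of _ one, unfolded mult_one_left])
    also have "\<dots> = sw comul x (\<lambda>a b. sw comul b (\<lambda>p q. mult (act a one) (act p (beta q w))))"
      by (rule coassoc; intro linearity_intros)
    also have "\<dots> = sw comul x (\<lambda>a b. mult (act a one) (sc (counit b) w))"
      by (simp add: mult_sw_right[symmetric] act_beta)
    also have "\<dots> = sw comul x (\<lambda>a b. sc (counit b) (mult (act a one) w))"
      by (simp add: linear_map_scale[OF lin_mult_right])
    also have "\<dots> = mult (act x one) w"
      by (rule counit_right_lin; intro linearity_intros)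
    finally show ?thesis .
  qed
  from this[of one] show ?thesis by simp
qed

lemma act_one_left: "act one z = z"
proof -
  have idem: "act one (act one u) = act one u" for u
  proof -
    have "act one (act one u) = act (sw comul one (\<lambda>a b. mult a (act b one))) u" by (rule act_act)
    also have "sw comul one (\<lambda>a b. mult a (act b one)) = one"
      by (simp add: comul_one linearity_intros act_one_right counit_one)
    finally show ?thesis .
  qed
  have surj: "act one (beta one y) = y" for y
    using act_beta[of one y] by (simp add: comul_one linearity_intros counit_one)
  show ?thesis using idem[of "beta one z"] by (simp add: surj)
qed

lemma act_bullet: "act (bmult a b) z = act a (act b z)"
  by (simp add: bullet_def act_act)

lemma bullet_one_left: "bmult one x = x"
  by (simp add: bullet_def comul_one linearity_intros act_one_left)

lemma bullet_one_right: "bmult x one = x"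
  by (simp add: bullet_def act_one_right linear_map_scale[OF lin_mult_right] counit_right)

lemma counit_bullet: "counit (bmult x y) = counit x * counit y"
proof -
  have "counit (bmult x y) = sw comul x (\<lambda>a b. counit a * counit b) * counit y"
    unfolding bullet_def by (simp add: counit_sw counit_mult counit_act sw_times_const mult.assoc)
  also have "sw comul x (\<lambda>a b. counit a * counit b) = counit x"
    by (rule counit_left_linform; intro linearity_intros)
  finally show ?thesis .
qed


lemma act_S_act_convolution: "sw comul w (\<lambda>a b. act a (Sact b)) = anti w"
proof -
  have "sw comul w (\<lambda>a b. act a (Sact b)) = sw comul w (\<lambda>a b. sw comul b (\<lambda>c d. act a (beta c (anti d))))"
    unfolding S_act_def by (simp add: act_sw_right)
  also have "\<dots> = sw comul w (\<lambda>v d. sw comul v (\<lambda>a c. act a (beta c (anti d))))"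
    by (rule coassoc[symmetric]; intro linearity_intros)
  also have "\<dots> = sw comul w (\<lambda>v d. sc (counit v) (anti d))" by (simp add: act_beta)
  also have "\<dots> = anti w" by (rule counit_left_lin; intro linearity_intros)
  finally show ?thesis .
qed

lemma bullet_antipode_right: "sw comul x (\<lambda>a b. bmult a (Sact b)) = sc (counit x) one"
proof -
  have "sw comul x (\<lambda>a b. bmult a (Sact b)) = sw comul x (\<lambda>a b. sw comul a (\<lambda>p q. mult p (act q (Sact b))))"
    unfolding bullet_def ..
  also have "\<dots> = sw comul x (\<lambda>p w. sw comul w (\<lambda>q b. mult p (act q (Sact b))))"
    by (rule coassoc; intro linearity_intros)
  also have "\<dots> = sw comul x (\<lambda>p w. mult p (anti w))"
    by (simp add: mult_sw_right[symmetric] act_S_act_convolution)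
  also have "\<dots> = sc (counit x) one" by (rule antipode_right)
  finally show ?thesis .
qed

lemma beta_unique:
  assumes "lin G" and inverse: "\<And>x. sw comul x (\<lambda>a b. act a (G b)) = sc (counit x) w"
  shows "G x = beta x w"
proof -
  have "beta x w = sw comul x (\<lambda>c u. sc (counit u) (beta c w))"
    by (rule counit_right_lin[symmetric]; intro linearity_intros)
  also have "\<dots> = sw comul x (\<lambda>c u. beta c (sc (counit u) w))"
    by (simp add: linear_map_scale[OF lin_beta_right])
  also have "\<dots> = sw comul x (\<lambda>c u. sw comul u (\<lambda>d b. beta c (act d (G b))))"
    by (simp add: inverse[symmetric] beta_sw_right)
  also have "\<dots> = sw comul x (\<lambda>v b. sw comul v (\<lambda>c d. beta c (act d (G b))))"
    by (rule coassoc[symmetric]; intro linearity_intros \<open>lin G\<close>)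
  also have "\<dots> = sw comul x (\<lambda>v b. sc (counit v) (G b))" by (simp add: beta_act)
  also have "\<dots> = G x" by (rule counit_left_lin[OF \<open>lin G\<close>])
  finally show ?thesis by simp
qed

lemma act_S_act: "act (Sact v) z = beta v z"
proof (rule beta_unique)
  show "lin (\<lambda>v. act (Sact v) z)" by (intro linearity_intros)
  fix x
  have "sw comul x (\<lambda>a b. act a (act (Sact b) z)) = act (sw comul x (\<lambda>a b. bmult a (Sact b))) z"
    by (simp add: act_bullet act_sw_left)
  then show "sw comul x (\<lambda>a b. act a (act (Sact b) z)) = sc (counit x) z"
    by (simp add: bullet_antipode_right linear_map_scale[OF lin_act_left] act_one_left)
qed

lemma beta_one_right: "beta v one = sc (counit v) one"
proof (rule beta_unique[symmetric])
  show "lin (\<lambda>v. sc (counit v) one)" by (intro linearity_intros)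
  fix x
  have "sw comul x (\<lambda>a b. act a (sc (counit b) one)) = sw comul x (\<lambda>a b. sc (counit b) (act a one))"
    by (simp add: linear_map_scale[OF lin_act_right])
  also have "\<dots> = act x one" by (rule counit_right_lin; intro linearity_intros)
  finally show "sw comul x (\<lambda>a b. act a (sc (counit b) one)) = sc (counit x) one"
    by (simp add: act_one_right)
qed

lemma beta_mult: "beta v (mult y z) = sw comul v (\<lambda>v1 v2. mult (beta v2 y) (beta v1 z))"
proof (rule beta_unique[symmetric])
  show "lin (\<lambda>v. sw comul v (\<lambda>v1 v2. mult (beta v2 y) (beta v1 z)))" by (intro linearity_intros)
  fix x
  have "sw comul x (\<lambda>a b. act a (sw comul b (\<lambda>b1 b2. mult (beta b2 y) (beta b1 z))))
     = sw comul x (\<lambda>a b. sw comul a (\<lambda>a1 a2. sw comul b (\<lambda>b1 b2. mult (act a1 (beta b2 y)) (act a2 (beta b1 z)))))"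
    by (simp add: act_sw_right act_mult, rule sw_cong, rule sw_commute)
  also have "\<dots> = sw comul x (\<lambda>a1 r. sw comul r (\<lambda>a2 b. sw comul b (\<lambda>b1 b2. mult (act a1 (beta b2 y)) (act a2 (beta b1 z)))))"
    by (rule coassoc; intro linearity_intros)
  also have "\<dots> = sw comul x (\<lambda>a1 r. sw comul r (\<lambda>s b2. sw comul s (\<lambda>a2 b1. mult (act a1 (beta b2 y)) (act a2 (beta b1 z)))))"
    by (rule sw_cong, rule coassoc[symmetric]; intro linearity_intros)
  also have "\<dots> = sw comul x (\<lambda>a1 r. sw comul r (\<lambda>s b2. sc (counit s) (mult (act a1 (beta b2 y)) z)))"
    by (simp add: mult_sw_right[symmetric] act_beta linear_map_scale[OF lin_mult_right])
  also have "\<dots> = sw comul x (\<lambda>a1 r. mult (act a1 (beta r y)) z)"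
    by (rule sw_cong, rule counit_left_lin; intro linearity_intros)
  also have "\<dots> = sc (counit x) (mult y z)"
    by (simp add: mult_sw_left[symmetric] act_beta linear_map_scale[OF lin_mult_left])
  finally show "sw comul x (\<lambda>a b. act a (sw comul b (\<lambda>b1 b2. mult (beta b2 y) (beta b1 z))))
      = sc (counit x) (mult y z)" .
qed

lemma comul_S_act:
  assumes "\<And>q. lin (\<lambda>p. G p q)" "\<And>p. lin (\<lambda>q. G p q)"
  shows "sw comul (Sact x) G = sw comul x (\<lambda>x1 x2. G (Sact x2) (Sact x1))"
proof (rule eq_by_linear_forms)
  fix \<phi> assume \<phi>: "linform \<phi>"
  have "sw comul (Sact x) (\<lambda>a b. \<phi> (G a b)) = sw comul x (\<lambda>x1 x2. \<phi> (G (Sact x2) (Sact x1)))"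
    by (rule comul_S_act_linform, rule bilinear_formI; rule linform_comp[OF \<phi>]) (use assms in auto)
  then show "\<phi> (sw comul (Sact x) G) = \<phi> (sw comul x (\<lambda>x1 x2. G (Sact x2) (Sact x1)))"
    by (simp add: linear_map_sw[OF \<phi>])
qed

lemma bullet_S_act_left: "bmult (Sact a) b = sw comul a (\<lambda>v d. beta v (mult (anti d) b))"
proof -
  have "bmult (Sact a) b = sw comul a (\<lambda>a1 a2. mult (Sact a2) (act (Sact a1) b))"
    unfolding bullet_def by (rule comul_S_act; intro linearity_intros)
  also have "\<dots> = sw comul a (\<lambda>a1 a2. sw comul a2 (\<lambda>c d. mult (beta c (anti d)) (beta a1 b)))"
    unfolding act_S_act by (simp add: S_act_def mult_sw_left)
  also have "\<dots> = sw comul a (\<lambda>v d. sw comul v (\<lambda>a1 c. mult (beta c (anti d)) (beta a1 b)))"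
    by (rule coassoc[symmetric]; intro linearity_intros)
  also have "\<dots> = sw comul a (\<lambda>v d. beta v (mult (anti d) b))" by (simp add: beta_mult)
  finally show ?thesis .
qed

lemma bullet_antipode_left: "sw comul x (\<lambda>a b. bmult (Sact a) b) = sc (counit x) one"
proof -
  have "sw comul x (\<lambda>a b. bmult (Sact a) b) = sw comul x (\<lambda>a b. sw comul a (\<lambda>v d. beta v (mult (anti d) b)))"
    by (simp add: bullet_S_act_left)
  also have "\<dots> = sw comul x (\<lambda>v u. sw comul u (\<lambda>d b. beta v (mult (anti d) b)))"
    by (rule coassoc; intro linearity_intros)
  also have "\<dots> = sw comul x (\<lambda>v u. sc (counit u) (beta v one))"
    by (simp add: beta_sw_right[symmetric] antipode_left linear_map_scale[OF lin_beta_right])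
  also have "\<dots> = beta x one" by (rule counit_right_lin; intro linearity_intros)
  finally show ?thesis by (simp add: beta_one_right)
qed


lemma comul_mult_act_linform:
  assumes B: "bilinear_form sc B"
  shows "sw comul (mult a (act b y)) B =
    sw4 comul a (\<lambda>a1 a2 a3 a4. sw comul b (\<lambda>b1 b2. sw comul y (\<lambda>y1 y2.
      B (mult a1 (act a2 (beta a4 (act b1 y1)))) (mult a3 (act b2 y2)))))"
  unfolding comul_mult_linform[OF B] sw4_def sw3_def
  by (intro sw_cong comul_act_linform bilinear_formI; intro linearity_intros bilinear_form_comp_left[OF B] bilinear_form_comp_right[OF B])

lemma beta_act_cancel:
  assumes B: "bilinear_form sc B"
  shows "sw comul v (\<lambda>a4 b1. sw comul y (\<lambda>y1 y2. B (mult a1 (act a2 (beta a4 (act b1 y1)))) (mult a3 (act b2 y2))))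
       = counit v * sw comul y (\<lambda>y1 y2. B (mult a1 (act a2 y1)) (mult a3 (act b2 y2)))"
proof -
  have "sw comul v (\<lambda>a4 b1. sw comul y (\<lambda>y1 y2. B (mult a1 (act a2 (beta a4 (act b1 y1)))) (mult a3 (act b2 y2))))
     = sw comul y (\<lambda>y1 y2. B (mult a1 (act a2 (sw comul v (\<lambda>a4 b1. beta a4 (act b1 y1))))) (mult a3 (act b2 y2)))"
    by (simp add: sw_commute[of comul v] bilinear_form_sw_left[OF B] act_sw_right mult_sw_right)
  also have "\<dots> = counit v * sw comul y (\<lambda>y1 y2. B (mult a1 (act a2 y1)) (mult a3 (act b2 y2)))"
    by (simp add: beta_act linear_map_scale[OF lin_act_right] linear_map_scale[OF lin_mult_right]
        bilinear_form_scale_left[OF B] const_times_sw)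
  finally show ?thesis .
qed

lemma comul_bullet_linform:
  assumes B: "bilinear_form sc B"
  shows "sw comul (bmult x y) B = sw comul x (\<lambda>x1 x2. sw comul y (\<lambda>y1 y2. B (bmult x1 y1) (bmult x2 y2)))"
proof -
  have "sw comul (bmult x y) B = sw comul x (\<lambda>a b. sw comul (mult a (act b y)) B)"
    unfolding bullet_def by (rule linear_map_sw[OF linform_sw[OF B]])
  also have "\<dots> = sw comul x (\<lambda>a b. sw comul a (\<lambda>p a4. sw comul p (\<lambda>r a3. sw comul r (\<lambda>a1 a2.
       sw comul b (\<lambda>b1 b2. sw comul y (\<lambda>y1 y2. B (mult a1 (act a2 (beta a4 (act b1 y1)))) (mult a3 (act b2 y2))))))))"
    by (simp only: comul_mult_act_linform[OF B] sw4_def sw3_def)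
  also have "\<dots> = sw comul x (\<lambda>p w. sw comul w (\<lambda>a4 b. sw comul p (\<lambda>r a3. sw comul r (\<lambda>a1 a2.
       sw comul b (\<lambda>b1 b2. sw comul y (\<lambda>y1 y2. B (mult a1 (act a2 (beta a4 (act b1 y1)))) (mult a3 (act b2 y2))))))))"
    by (rule coassoc_linform; intro linearity_intros bilinear_form_comp_left[OF B] bilinear_form_comp_right[OF B])
  also have "\<dots> = sw comul x (\<lambda>p w. sw comul p (\<lambda>r a3. sw comul r (\<lambda>a1 a2. sw comul w (\<lambda>a4 b.
       sw comul b (\<lambda>b1 b2. sw comul y (\<lambda>y1 y2. B (mult a1 (act a2 (beta a4 (act b1 y1)))) (mult a3 (act b2 y2))))))))"
    by (rule sw_cong, rule trans[OF sw_commute], rule sw_cong, rule sw_commute)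
  also have "\<dots> = sw comul x (\<lambda>p w. sw comul p (\<lambda>r a3. sw comul r (\<lambda>a1 a2. sw comul w (\<lambda>v b2.
       sw comul v (\<lambda>a4 b1. sw comul y (\<lambda>y1 y2. B (mult a1 (act a2 (beta a4 (act b1 y1)))) (mult a3 (act b2 y2))))))))"
    by (rule sw_cong, rule sw_cong, rule sw_cong, rule coassoc_linform[symmetric]; intro linearity_intros bilinear_form_comp_left[OF B] bilinear_form_comp_right[OF B])
  also have "\<dots> = sw comul x (\<lambda>p w. sw comul p (\<lambda>r a3. sw comul r (\<lambda>a1 a2. sw comul w (\<lambda>v b2.
       counit v * sw comul y (\<lambda>y1 y2. B (mult a1 (act a2 y1)) (mult a3 (act b2 y2)))))))"
    by (simp add: beta_act_cancel[OF B])
  also have "\<dots> = sw comul x (\<lambda>p w. sw comul p (\<lambda>r a3. sw comul r (\<lambda>a1 a2.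
       sw comul y (\<lambda>y1 y2. B (mult a1 (act a2 y1)) (mult a3 (act w y2))))))"
    by (rule sw_cong, rule sw_cong, rule sw_cong, rule counit_left_linform; intro linearity_intros bilinear_form_comp_left[OF B] bilinear_form_comp_right[OF B])
  also have "\<dots> = sw comul x (\<lambda>r u. sw comul u (\<lambda>a3 a4. sw comul r (\<lambda>a1 a2.
       sw comul y (\<lambda>y1 y2. B (mult a1 (act a2 y1)) (mult a3 (act a4 y2))))))"
    by (rule coassoc_linform; intro linearity_intros bilinear_form_comp_left[OF B] bilinear_form_comp_right[OF B])
  also have "\<dots> = sw comul x (\<lambda>r u. sw comul y (\<lambda>y1 y2. sw comul r (\<lambda>a1 a2.
       sw comul u (\<lambda>a3 a4. B (mult a1 (act a2 y1)) (mult a3 (act a4 y2))))))"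
    by (rule sw_cong, rule trans[OF sw_commute], rule trans[OF sw_cong[OF sw_commute]], rule sw_commute)
  also have "\<dots> = sw comul x (\<lambda>x1 x2. sw comul y (\<lambda>y1 y2. B (bmult x1 y1) (bmult x2 y2)))"
    unfolding bullet_def by (simp only: bilinear_form_sw_left[OF B], simp only: bilinear_form_sw_right[OF B])
  finally show ?thesis .
qed

lemma comul_bullet:
  assumes "\<And>q. lin (\<lambda>p. G p q)" "\<And>p. lin (\<lambda>q. G p q)"
  shows "sw comul (bmult x y) G = sw comul x (\<lambda>x1 x2. sw comul y (\<lambda>y1 y2. G (bmult x1 y1) (bmult x2 y2)))"
proof (rule eq_by_linear_forms)
  fix \<phi> assume \<phi>: "linform \<phi>"
  have "sw comul (bmult x y) (\<lambda>a b. \<phi> (G a b))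
      = sw comul x (\<lambda>x1 x2. sw comul y (\<lambda>y1 y2. \<phi> (G (bmult x1 y1) (bmult x2 y2))))"
    by (rule comul_bullet_linform, rule bilinear_formI; rule linform_comp[OF \<phi>]) (use assms in auto)
  then show "\<phi> (sw comul (bmult x y) G) = \<phi> (sw comul x (\<lambda>x1 x2. sw comul y (\<lambda>y1 y2. G (bmult x1 y1) (bmult x2 y2))))"
    by (simp add: linear_map_sw[OF \<phi>])
qed

lemma bullet_assoc: "bmult (bmult x y) z = bmult x (bmult y z)"
proof -
  have "bmult (bmult x y) z = sw comul (bmult x y) (\<lambda>p q. mult p (act q z))" by (simp add: bullet_def)
  also have "\<dots> = sw comul x (\<lambda>x1 x2. sw comul y (\<lambda>y1 y2. mult (bmult x1 y1) (act (bmult x2 y2) z)))"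
    by (rule comul_bullet; intro linearity_intros)
  also have "\<dots> = sw comul x (\<lambda>x1 x2. sw comul y (\<lambda>y1 y2. sw comul x1 (\<lambda>a b. mult (mult a (act b y1)) (act x2 (act y2 z)))))"
    unfolding act_bullet by (simp add: bullet_def mult_sw_left)
  also have "\<dots> = sw comul x (\<lambda>x1 x2. sw comul x1 (\<lambda>a b. sw comul y (\<lambda>y1 y2. mult (mult a (act b y1)) (act x2 (act y2 z)))))"
    by (rule sw_cong, rule sw_commute)
  also have "\<dots> = sw comul x (\<lambda>a w. sw comul w (\<lambda>b c. sw comul y (\<lambda>y1 y2. mult (mult a (act b y1)) (act c (act y2 z)))))"
    by (rule coassoc; intro linearity_intros)
  also have "\<dots> = sw comul x (\<lambda>a w. sw comul y (\<lambda>y1 y2. sw comul w (\<lambda>b c. mult a (mult (act b y1) (act c (act y2 z))))))"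
    by (rule sw_cong, rule trans[OF sw_commute]) (simp add: mult_assoc)
  also have "\<dots> = bmult x (bmult y z)"
    by (simp add: bullet_def act_sw_right mult_sw_right act_mult)
  finally show ?thesis .
qed

end

theorem proposition3:
  fixes sc :: "'k::field \<Rightarrow> 'h::ab_group_add \<Rightarrow> 'h"
    and mult act beta :: "'h \<Rightarrow> 'h \<Rightarrow> 'h"
    and one :: 'h
    and comul :: "'h \<Rightarrow> ('h \<times> 'h) list"
    and counit :: "'h \<Rightarrow> 'k"
    and anti :: "'h \<Rightarrow> 'h"
  assumes "yd_post_hopf sc mult one comul counit anti act beta"
  shows "is_hopf_algebra sc (bullet comul mult act) one comul counit (S_act comul beta anti)"
proof -
  have coalgebra: "is_coalgebra sc comul counit"
    using assms unfolding yd_post_hopf_def by (elim conjE) (simp only:)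
  then interpret yd_post_hopf_algebra sc comul counit mult act beta one anti
    using assms unfolding yd_post_hopf_algebra_def yd_post_hopf_algebra_axioms_def coalgebra_space_def
      coalgebra_space_axioms_def by (simp add: is_coalgebra_def)
  show ?thesis
    unfolding is_hopf_algebra_def is_algebra_def bilinear_map_def
  proof (intro conjI allI impI)
    show "Vector_Spaces.vector_space sc" by (rule vector_space_axioms)
    show "lin (bmult x)" "lin (\<lambda>x. bmult x y)" "lin Sact" for x y by (intro linearity_intros)+
    show "bmult (bmult x y) z = bmult x (bmult y z)" for x y z by (rule bullet_assoc)
    show "bmult one x = x" "bmult x one = x" for x by (rule bullet_one_left, rule bullet_one_right)
    show "is_coalgebra sc comul counit" by (rule coalgebra)
    show "sw comul (bmult x y) B = sw comul x (\<lambda>x1 x2. sw comul y (\<lambda>y1 y2. B (bmult x1 y1) (bmult x2 y2)))"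
      if "bilinear_form sc B" for B x y by (rule comul_bullet_linform[OF that])
    show "sw comul one B = B one one" if "bilinear_form sc B" for B by (rule comul_one_linform[OF that])
    show "counit (bmult x y) = counit x * counit y" for x y by (rule counit_bullet)
    show "counit one = 1" by (rule counit_one)
    show "sw comul x (\<lambda>a b. bmult a (Sact b)) = sc (counit x) one" for x by (rule bullet_antipode_right)
    show "sw comul x (\<lambda>a b. bmult (Sact a) b) = sc (counit x) one" for x by (rule bullet_antipode_left)
  qed
qed

end
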